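(* Let $0<q<1$, $\alpha>-1$, let $n\ge0$ be an integer, and let $\lambda_s$ be the smallest eigenvalue of $\left((q^{\alpha+1};q)_{j+k}\,q^{-\binom{j+k+1}{2}-\alpha(j+k)}\right)_{j,k=0}^{n}$. Then \[ \lambda_s\ \ge\ \left(\sum_{m=0}^{n}\frac{q^m}{(q;q)_m\,(q^{\alpha+1};q)_m}\right)^{-1}. \] Moreover, with $\ell_m^{(\alpha)}(x;q)=(-1)^m\sqrt{\frac{(q^{\alpha+1};q)_m q^m}{(q;q)_m}}\sum_{k=0}^{m}\frac{(q^{-m};q)_k\,q^{\binom{k+1}{2}}q^{(\alpha+m)k}x^k}{(q;q)_k(q^{\alpha+1};q)_k}$, one has $\big(\ell_m^{(\alpha)}(-1;q)\big)^2=\frac{q^m}{(q;q)_m(q^{\alpha+1};q)_m}$ for every $m\ge0$.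
   Context: $(a;q)_m=\prod_{i=0}^{m-1}(1-aq^i)$ for integers $m\ge0$ (empty product $=1$). *)

theory Defs
  imports "Jordan_Normal_Form.Char_Poly"
begin

definition qpoch :: "real \<Rightarrow> real \<Rightarrow> nat \<Rightarrow> real" where
  "qpoch a q m = (\<Prod>i<m. (1 - a * q ^ i))"

definition hankel_mat :: "real \<Rightarrow> real \<Rightarrow> nat \<Rightarrow> real mat" where
  "hankel_mat q \<alpha> n = mat (n+1) (n+1)
     (\<lambda>(j,k). qpoch (q powr (\<alpha>+1)) q (j+k)
        * q powr (- real ((j+k+1) choose 2) - \<alpha> * real (j+k)))"

definition ell :: "real \<Rightarrow> real \<Rightarrow> nat \<Rightarrow> real \<Rightarrow> real" where
  "ell q \<alpha> m x = (-1) ^ m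
     * sqrt (qpoch (q powr (\<alpha>+1)) q m * q ^ m / qpoch q q m)
     * (\<Sum>k\<le>m. qpoch (q powr (- real m)) q k * q ^ ((k+1) choose 2)
          * q powr ((\<alpha> + real m) * real k) * x ^ k
          / (qpoch q q k * qpoch (q powr (\<alpha>+1)) q k))"

end

theory Submission
  imports Defs "HOL-Analysis.Convex" "HOL-Analysis.L2_Norm"
begin

(* Put a = q^(alpha+1). The matrix entries are the moments mu_i = (a;q)_i / (a^i q^(i choose 2))
   of the little q-Laguerre weight, whose orthogonal polynomials p_m(x) = sum_k c_mk x^k have the
   explicit coefficients c_mk = (-1)^k [m,k]_q q^(k(k-1)) a^k / (a;q)_k and squared norms
   d_m = (q;q)_m / (q^m (a;q)_m). Orthogonality reduces to the q-binomial theorem: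
   sum_j (-1)^j [m,j]_q q^(j choose 2) q^(-ij) = (q^(-i);q)_m vanishes for i < m.

   Since (c_mk) is triangular, an eigenvector can be written v_k = sum_m b_m c_mk, and then
   lambda |v|^2 = v^T H v = sum_m b_m^2 d_m. On the other hand |v|_2 <= |v|_1 <= sum_m |b_m| P_m
   with P_m = sum_k |c_mk|, so Cauchy-Schwarz gives |v|^2 <= (sum_m b_m^2 d_m) (sum_m P_m^2 / d_m).
   The signs of c_mk alternate, hence P_m = p_m(-1) = 1 / (a;q)_m, and
   P_m^2 / d_m = ell_m(-1)^2 = q^m / ((q;q)_m (a;q)_m). *)

lemma qpoch_0 [simp]: "qpoch a q 0 = 1"
  by (simp add: qpoch_def)

lemma qpoch_Suc: "qpoch a q (Suc k) = qpoch a q k * (1 - a * q ^ k)"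
  by (simp add: qpoch_def)

lemma qpoch_Suc_shift: "qpoch a q (Suc k) = (1 - a) * qpoch (a * q) q k"
  unfolding qpoch_def by (subst prod.lessThan_Suc_shift) (simp add: mult.assoc)

lemma qpoch_add: "qpoch a q (k + j) = qpoch a q k * qpoch (a * q ^ k) q j"
  by (induction j) (simp_all add: qpoch_Suc power_add mult.assoc)

lemma qpoch_pos:
  assumes "0 \<le> a" "a < 1" "0 \<le> q" "q \<le> 1"
  shows "0 < qpoch a q k"
  unfolding qpoch_def
proof (rule prod_pos)
  fix i
  have "a * q ^ i \<le> a"
    using assms by (simp add: mult_left_le power_le_one)
  then show "0 < 1 - a * q ^ i"
    using assms by simp
qed

lemma qpoch_inverse_power_eq_0:
  assumes "q \<noteq> 0" "i < m"
  shows "qpoch (inverse q ^ i) q m = 0"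
  unfolding qpoch_def using assms
  by (intro prod_zero) (auto intro!: bexI[where x = i] simp: field_simps)

lemma Suc_choose_two: "Suc k choose 2 = (k choose 2) + k"
  by (simp add: numeral_2_eq_2)

lemma add_choose_two: "(j + k) choose 2 = (j choose 2) + (k choose 2) + j * k"
  by (induction k) (simp_all add: Suc_choose_two)

(* Meaningful only when (q;q)_k <> 0. The truncated subtraction m - t is harmless: for k > m the
   factor t = m already vanishes, as it should. *)
definition q_binomial :: "real \<Rightarrow> nat \<Rightarrow> nat \<Rightarrow> real" where
  "q_binomial q m k = (\<Prod>t<k. 1 - q ^ (m - t)) / qpoch q q k"

lemma q_binomial_0_right [simp]: "q_binomial q m 0 = 1"
  by (simp add: q_binomial_def)

lemma q_binomial_eq_0:
  assumes "m < k"
  shows "q_binomial q m k = 0"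
  unfolding q_binomial_def using assms
  by (auto intro!: prod_zero bexI[where x = m])

lemma q_binomial_Suc_Suc:
  assumes "qpoch q q (Suc k) \<noteq> 0"
  shows "q_binomial q (Suc m) (Suc k) = q_binomial q m k + q ^ Suc k * q_binomial q m (Suc k)"
proof -
  define N where "N = (\<Prod>t<k. 1 - q ^ (m - t))"
  have N_Suc_Suc: "(\<Prod>t<Suc k. 1 - q ^ (Suc m - t)) = (1 - q ^ Suc m) * N"
    unfolding N_def by (subst prod.lessThan_Suc_shift) simp
  have N_Suc: "(\<Prod>t<Suc k. 1 - q ^ (m - t)) = N * (1 - q ^ (m - k))"
    by (simp add: N_def)
  have "(1 - q ^ Suc m) * N = N * (1 - q ^ Suc k) + q ^ Suc k * (N * (1 - q ^ (m - k)))"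
  proof (cases "k \<le> m")
    case True
    then have "q ^ Suc k * q ^ (m - k) = q ^ Suc m"
      by (simp flip: power_add)
    then show ?thesis
      by (simp add: algebra_simps)
  next
    case False
    then have "N = 0"
      unfolding N_def by (auto intro!: prod_zero bexI[where x = m])
    then show ?thesis by simp
  qed
  moreover have "qpoch q q k \<noteq> 0" "1 - q * q ^ k \<noteq> 0"
    using assms by (auto simp: qpoch_Suc)
  ultimately show ?thesis
    unfolding q_binomial_def N_Suc_Suc N_Suc N_def[symmetric] qpoch_Suc
    by (simp add: field_simps)
qed

lemma q_binomial_self:
  assumes "0 < q" "q < 1"
  shows "q_binomial q m m = 1"
proof (induction m)
  case (Suc m)
  have "qpoch q q (Suc m) \<noteq> 0"
    using qpoch_pos[of q q "Suc m"] assms by simp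
  then show ?case
    using Suc q_binomial_Suc_Suc[of q m m] q_binomial_eq_0[of m "Suc m"] by simp
qed simp

lemma q_binomial_nonneg:
  assumes "0 \<le> q" "q < 1"
  shows "0 \<le> q_binomial q m k"
  unfolding q_binomial_def
  using assms qpoch_pos[of q q k]
  by (intro divide_nonneg_pos prod_nonneg) (auto simp: power_le_one)

lemma sum_q_binomial_Suc:
  assumes "0 < q" "q < 1"
  shows "(\<Sum>k\<le>Suc m. q_binomial q (Suc m) k * f k)
    = (\<Sum>k\<le>m. q_binomial q m k * (f (Suc k) + q ^ k * f k))"
proof -
  have pascal: "q_binomial q (Suc m) (Suc k) = q_binomial q m k + q ^ Suc k * q_binomial q m (Suc k)" for k
    using qpoch_pos[of q q "Suc k"] assms by (intro q_binomial_Suc_Suc) simp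
  have "(\<Sum>k\<le>Suc m. q_binomial q (Suc m) k * f k)
      = f 0 + (\<Sum>k\<le>m. q_binomial q m k * f (Suc k))
          + (\<Sum>k\<le>m. q ^ Suc k * q_binomial q m (Suc k) * f (Suc k))"
    by (subst sum.atMost_Suc_shift) (simp add: pascal distrib_right sum.distrib)
  also have "(\<Sum>k\<le>m. q ^ Suc k * q_binomial q m (Suc k) * f (Suc k))
      = (\<Sum>k\<le>Suc m. q ^ k * q_binomial q m k * f k) - f 0"
    by (subst sum.atMost_Suc_shift) simp
  also have "(\<Sum>k\<le>Suc m. q ^ k * q_binomial q m k * f k) = (\<Sum>k\<le>m. q ^ k * q_binomial q m k * f k)"
    using q_binomial_eq_0[of m "Suc m" q] by simp
  finally show ?thesis
    by (simp add: algebra_simps sum.distrib)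
qed

theorem q_binomial_theorem:
  assumes "0 < q" "q < 1"
  shows "(\<Sum>k\<le>m. (-1) ^ k * q_binomial q m k * q ^ (k choose 2) * x ^ k) = qpoch x q m"
proof (induction m arbitrary: x)
  case (Suc m)
  have "(-1) ^ Suc k * q ^ (Suc k choose 2) * x ^ Suc k + q ^ k * ((-1) ^ k * q ^ (k choose 2) * x ^ k)
      = (1 - x) * ((-1) ^ k * q ^ (k choose 2) * (q * x) ^ k)" for k
    by (simp add: Suc_choose_two power_add power_mult_distrib algebra_simps)
  then have "(\<Sum>k\<le>Suc m. (-1) ^ k * q_binomial q (Suc m) k * q ^ (k choose 2) * x ^ k)
      = (1 - x) * (\<Sum>k\<le>m. (-1) ^ k * q_binomial q m k * q ^ (k choose 2) * (q * x) ^ k)"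
    using sum_q_binomial_Suc[OF assms, of m "\<lambda>k. (-1) ^ k * q ^ (k choose 2) * x ^ k"]
    by (simp add: sum_distrib_left mult_ac)
  then show ?case
    by (simp add: Suc.IH qpoch_Suc_shift mult.commute[of q])
qed (simp add: numeral_2_eq_2)

lemma sum_q_binomial_div_qpoch:
  assumes "0 < q" "q < 1" "0 \<le> a" "a < 1"
  shows "(\<Sum>k\<le>m. q_binomial q m k * q ^ (2 * (k choose 2)) * a ^ k / qpoch a q k) = 1 / qpoch a q m"
  using assms(3,4)
proof (induction m arbitrary: a)
  case (Suc m)
  define T where "T k = q ^ (2 * (k choose 2)) * a ^ k / qpoch a q k" for k
  have aq: "0 \<le> a * q" "a * q < 1"
    using Suc.prems assms mult_left_le[of q a] by auto
  have step: "(1 - a) * (T (Suc k) + q ^ k * T k)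
      = q ^ (2 * (k choose 2)) * (a * q) ^ k / qpoch (a * q) q k" (is "_ = ?S k") for k
  proof -
    have pos: "0 < qpoch (a * q) q k" "0 < qpoch a q k"
      using qpoch_pos[OF aq] qpoch_pos[of a q] Suc.prems assms by auto
    have "qpoch a q k * (1 - a * q ^ k) = (1 - a) * qpoch (a * q) q k"
      by (metis qpoch_Suc qpoch_Suc_shift)
    then have split: "(1 - a) / qpoch a q k = (1 - a * q ^ k) / qpoch (a * q) q k"
      using pos by (simp add: field_simps)
    have "(1 - a) * T (Suc k) = ?S k * (a * q ^ k)"
      using Suc.prems pos
      by (simp add: T_def qpoch_Suc_shift Suc_choose_two power_add power_mult_distrib mult_2)
    moreover have "(1 - a) * (q ^ k * T k) = q ^ (2 * (k choose 2)) * (a * q) ^ k * ((1 - a) / qpoch a q k)"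
      by (simp add: T_def power_mult_distrib mult_ac)
    then have "(1 - a) * (q ^ k * T k) = ?S k * (1 - a * q ^ k)"
      unfolding split by simp
    ultimately have "(1 - a) * (T (Suc k) + q ^ k * T k) = ?S k * (a * q ^ k + (1 - a * q ^ k))"
      by (simp only: distrib_left)
    then show ?thesis
      by simp
  qed
  define X where "X = (\<Sum>k\<le>Suc m. q_binomial q (Suc m) k * T k)"
  have "(1 - a) * X
      = (\<Sum>k\<le>m. q_binomial q m k * ((1 - a) * (T (Suc k) + q ^ k * T k)))"
    unfolding X_def sum_q_binomial_Suc[OF assms(1,2)] by (simp add: sum_distrib_left mult_ac)
  also have "\<dots> = 1 / qpoch (a * q) q m"
    unfolding step using Suc.IH[OF aq] by (simp add: mult.assoc)
  finally have "X = 1 / ((1 - a) * qpoch (a * q) q m)"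
    using Suc.prems qpoch_pos[OF aq, of q m] assms by (simp add: field_simps)
  then show ?case
    by (simp add: X_def T_def qpoch_Suc_shift mult.assoc)
qed (simp add: numeral_2_eq_2)

lemma qpoch_inverse_power:
  assumes "0 < q" "q < 1"
  shows "qpoch (inverse q ^ m) q k
    = (-1) ^ k * inverse q ^ (m * k) * q ^ (k choose 2) * q_binomial q m k * qpoch q q k"
proof -
  have "qpoch (inverse q ^ m) q k = (-1) ^ k * inverse q ^ (m * k) * q ^ (k choose 2) * (\<Prod>t<k. 1 - q ^ (m - t))"
  proof (induction k)
    case (Suc k)
    show ?case
    proof (cases "k \<le> m")
      case True
      then have "1 - inverse q ^ m * q ^ k = - (inverse q ^ m * q ^ k) * (1 - q ^ (m - k))"
        using assms by (simp add: field_simps flip: power_add)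
      then show ?thesis
        by (simp add: qpoch_Suc Suc.IH Suc_choose_two power_add mult_ac)
    next
      case False
      then have "qpoch (inverse q ^ m) q k = 0" "qpoch (inverse q ^ m) q (Suc k) = 0"
        using qpoch_inverse_power_eq_0[of q m] assms by auto
      moreover have "(\<Prod>t<Suc k. 1 - q ^ (m - t)) = 0"
        using False by (auto intro!: prod_zero bexI[where x = m])
      ultimately show ?thesis by simp
    qed
  qed (simp add: numeral_2_eq_2)
  moreover have "qpoch q q k \<noteq> 0"
    using qpoch_pos[of q q k] assms by simp
  ultimately show ?thesis
    by (simp add: q_binomial_def)
qed

(* Up to normalisation, the left-hand side is the m-th q-difference of the polynomial
   y^i * prod_l (y - b q^l) of degree i + k, sampled at y = q^(-j); it kills degrees below m. *)
lemma q_difference_poly: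
  assumes "0 < q" "q < 1" "i + k \<le> m"
  shows "(\<Sum>j\<le>m. (-1) ^ j * q_binomial q m j * q ^ (j choose 2)
            * (inverse q ^ j) ^ i * (\<Prod>l<k. inverse q ^ j - b * q ^ l))
    = (if i + k = m then qpoch (inverse q ^ m) q m else 0)"
proof -
  define S where "S i k = (\<Sum>j\<le>m. (-1) ^ j * q_binomial q m j * q ^ (j choose 2)
            * (inverse q ^ j) ^ i * (\<Prod>l<k. inverse q ^ j - b * q ^ l))" for i k
  have "S i k = (if i + k = m then qpoch (inverse q ^ m) q m else 0)" if "i + k \<le> m" for i k
    using that
  proof (induction k arbitrary: i)
    case 0
    have "(inverse q ^ j) ^ i = (inverse q ^ i) ^ j" for j
      by (simp add: mult.commute flip: power_mult)
    then show ?case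
      using q_binomial_theorem[OF assms(1,2), of m "inverse q ^ i"] qpoch_inverse_power_eq_0[of q i m]
        0 assms(1)
      by (auto simp: S_def)
  next
    case (Suc k)
    have "S i (Suc k) = S (Suc i) k - b * q ^ k * S i k"
      by (simp add: S_def sum_subtractf sum_distrib_left algebra_simps)
    then show ?case
      using Suc.IH[of i] Suc.IH[of "Suc i"] Suc.prems by auto
  qed
  then show ?thesis
    using assms(3) by (simp add: S_def)
qed

lemma triangular_expansion:
  fixes c :: "nat \<Rightarrow> nat \<Rightarrow> 'a :: field"
  assumes "\<And>m j. m < j \<Longrightarrow> c m j = 0" "\<And>m. m \<le> n \<Longrightarrow> c m m \<noteq> 0"
  shows "\<exists>b. \<forall>j\<le>n. v j = (\<Sum>m\<le>n. b m * c m j)"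
  using assms(2)
proof (induction n arbitrary: v)
  case 0
  then show ?case
    by (intro exI[of _ "\<lambda>_. v 0 / c 0 0"]) simp
next
  case (Suc n)
  define \<beta> where "\<beta> = v (Suc n) / c (Suc n) (Suc n)"
  obtain b where b: "\<forall>j\<le>n. v j - \<beta> * c (Suc n) j = (\<Sum>m\<le>n. b m * c m j)"
    using Suc.IH[of "\<lambda>j. v j - \<beta> * c (Suc n) j"] Suc.prems by auto
  have "v j = (\<Sum>m\<le>Suc n. (b(Suc n := \<beta>)) m * c m j)" if "j \<le> Suc n" for j
  proof (cases "j = Suc n")
    case True
    then show ?thesis
      using assms(1) Suc.prems[of "Suc n"] by (simp add: \<beta>_def)
  next
    case False
    then have "v j - \<beta> * c (Suc n) j = (\<Sum>m\<le>n. b m * c m j)"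
      using b that by simp
    then show ?thesis
      by (simp add: diff_eq_eq)
  qed
  then show ?case
    by blast
qed

lemma bilinear_expansion:
  "(\<Sum>i\<in>I. \<Sum>k\<in>K. (\<Sum>m\<in>M. f m i) * (\<Sum>m'\<in>M'. g m' k) * h i k)
    = (\<Sum>m\<in>M. \<Sum>m'\<in>M'. \<Sum>i\<in>I. \<Sum>k\<in>K. f m i * g m' k * (h i k :: 'a :: comm_semiring_1))"
proof -
  have "(\<Sum>m\<in>M. f m i) * (\<Sum>m'\<in>M'. g m' k) * h i k = (\<Sum>(m, m')\<in>M \<times> M'. f m i * g m' k * h i k)"
    for i k
    by (subst sum.cartesian_product[symmetric]) (simp only: sum_product, simp add: sum_distrib_right)
  then have "(\<Sum>i\<in>I. \<Sum>k\<in>K. (\<Sum>m\<in>M. f m i) * (\<Sum>m'\<in>M'. g m' k) * h i k)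
      = (\<Sum>(i, k)\<in>I \<times> K. \<Sum>(m, m')\<in>M \<times> M'. f m i * g m' k * h i k)"
    by (simp add: sum.cartesian_product[where A = I and B = K])
  also have "\<dots> = (\<Sum>(m, m')\<in>M \<times> M'. \<Sum>(i, k)\<in>I \<times> K. f m i * g m' k * h i k)"
    unfolding split_def by (rule sum.swap)
  finally show ?thesis
    by (simp add: sum.cartesian_product[where A = M and B = M'] sum.cartesian_product[where A = I and B = K])
qed

lemma sum_power2_le_sum_abs_power2:
  fixes f :: "'a \<Rightarrow> real"
  shows "(\<Sum>i\<in>A. (f i)\<^sup>2) \<le> (\<Sum>i\<in>A. \<bar>f i\<bar>)\<^sup>2"
  using L2_set_le_sum_abs[of f A] by (intro sqrt_le_D) (simp add: L2_set_def)

lemma quadratic_form_orthogonal_expansion: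
  fixes h c :: "nat \<Rightarrow> nat \<Rightarrow> 'a :: comm_ring_1"
  assumes b: "\<forall>j\<le>n. v j = (\<Sum>m\<le>n. b m * c m j)"
    and orthogonal: "\<And>m m'. m \<le> n \<Longrightarrow> m' \<le> n \<Longrightarrow>
      (\<Sum>i\<le>n. \<Sum>k\<le>n. c m i * c m' k * h i k) = (if m = m' then d m else 0)"
  shows "(\<Sum>i\<le>n. \<Sum>k\<le>n. v i * v k * h i k) = (\<Sum>m\<le>n. (b m)\<^sup>2 * d m)"
proof -
  have "(\<Sum>i\<le>n. \<Sum>k\<le>n. v i * v k * h i k)
      = (\<Sum>i\<le>n. \<Sum>k\<le>n. (\<Sum>m\<le>n. b m * c m i) * (\<Sum>m'\<le>n. b m' * c m' k) * h i k)"
    using b by simp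
  also have "\<dots> = (\<Sum>m\<le>n. \<Sum>m'\<le>n. b m * b m' * (\<Sum>i\<le>n. \<Sum>k\<le>n. c m i * c m' k * h i k))"
    unfolding bilinear_expansion by (simp add: sum_distrib_left mult_ac)
  also have "\<dots> = (\<Sum>m\<le>n. \<Sum>m'\<le>n. if m = m' then b m * b m' * d m else 0)"
    by (intro sum.cong refl) (simp add: orthogonal)
  also have "\<dots> = (\<Sum>m\<le>n. (b m)\<^sup>2 * d m)"
    by (simp add: power2_eq_square)
  finally show ?thesis .
qed

lemma quadratic_form_lower_bound:
  fixes h c :: "nat \<Rightarrow> nat \<Rightarrow> real" and d v :: "nat \<Rightarrow> real"
  assumes upper: "\<And>m j. m < j \<Longrightarrow> c m j = 0"
    and diag: "\<And>m. m \<le> n \<Longrightarrow> c m m \<noteq> 0"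
    and orthogonal: "\<And>m m'. m \<le> n \<Longrightarrow> m' \<le> n \<Longrightarrow>
      (\<Sum>i\<le>n. \<Sum>k\<le>n. c m i * c m' k * h i k) = (if m = m' then d m else 0)"
    and pos: "\<And>m. m \<le> n \<Longrightarrow> 0 < d m"
  shows "(\<Sum>i\<le>n. (v i)\<^sup>2)
    \<le> (\<Sum>m\<le>n. (\<Sum>j\<le>m. \<bar>c m j\<bar>)\<^sup>2 / d m) * (\<Sum>i\<le>n. \<Sum>k\<le>n. v i * v k * h i k)"
proof -
  obtain b where b: "\<forall>j\<le>n. v j = (\<Sum>m\<le>n. b m * c m j)"
    using triangular_expansion[of c n v] upper diag by blast
  define P where "P m = (\<Sum>j\<le>m. \<bar>c m j\<bar>)" for m
  have form: "(\<Sum>i\<le>n. \<Sum>k\<le>n. v i * v k * h i k) = (\<Sum>m\<le>n. (b m)\<^sup>2 * d m)"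
    using b orthogonal by (rule quadratic_form_orthogonal_expansion)
  have "(\<Sum>j\<le>n. \<bar>v j\<bar>) \<le> (\<Sum>j\<le>n. \<Sum>m\<le>n. \<bar>b m\<bar> * \<bar>c m j\<bar>)"
    using b by (intro sum_mono) (simp add: sum_abs[THEN order_trans] abs_mult)
  also have "\<dots> = (\<Sum>m\<le>n. \<bar>b m\<bar> * P m)"
  proof -
    have "(\<Sum>j\<le>n. \<bar>c m j\<bar>) = P m" if "m \<le> n" for m
      unfolding P_def using that upper by (intro sum.mono_neutral_right) auto
    then show ?thesis
      by (simp add: sum.swap[of _ "{..n}"] sum_distrib_left[symmetric])
  qed
  also have "\<dots> = (\<Sum>m\<le>n. (\<bar>b m\<bar> * sqrt (d m)) * (P m / sqrt (d m)))"
    using pos by (intro sum.cong refl) (simp add: less_imp_le less_imp_neq[symmetric])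
  finally have l1: "(\<Sum>j\<le>n. \<bar>v j\<bar>) \<le> \<dots>" .
  have "(\<Sum>i\<le>n. (v i)\<^sup>2) \<le> (\<Sum>j\<le>n. \<bar>v j\<bar>)\<^sup>2"
    by (rule sum_power2_le_sum_abs_power2)
  also have "\<dots> \<le> (\<Sum>m\<le>n. (\<bar>b m\<bar> * sqrt (d m)) * (P m / sqrt (d m)))\<^sup>2"
    using l1 by (intro power_mono) (auto intro: sum_nonneg)
  also have "\<dots> \<le> (\<Sum>m\<le>n. (\<bar>b m\<bar> * sqrt (d m))\<^sup>2) * (\<Sum>m\<le>n. (P m / sqrt (d m))\<^sup>2)"
    by (rule Cauchy_Schwarz_ineq_sum)
  also have "\<dots> = (\<Sum>m\<le>n. (b m)\<^sup>2 * d m) * (\<Sum>m\<le>n. (P m)\<^sup>2 / d m)"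
    using pos by (intro arg_cong2[where f = "(*)"] sum.cong refl)
      (simp_all add: power_mult_distrib power_divide less_imp_le)
  finally show ?thesis
    using form by (simp add: P_def mult.commute)
qed

lemma eigenvalue_ge_inverse:
  fixes A :: "real mat"
  assumes "eigenvalue A lam" "0 < T"
    and "\<And>v. v \<in> carrier_vec (dim_row A) \<Longrightarrow> v \<bullet> v \<le> T * (v \<bullet> (A *\<^sub>v v))"
  shows "inverse T \<le> lam"
proof -
  obtain v where v: "v \<in> carrier_vec (dim_row A)" "v \<noteq> 0\<^sub>v (dim_row A)" "A *\<^sub>v v = lam \<cdot>\<^sub>v v"
    using assms(1) unfolding eigenvalue_def eigenvector_def by auto
  obtain i where i: "i < dim_row A" "v $ i \<noteq> 0"
    using v(1,2) by (metis carrier_vecD eq_vecI index_zero_vec(1,2))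
  have "0 < v \<bullet> v"
    unfolding scalar_prod_def using v(1) i by (intro sum_pos2[of _ i]) (auto simp: zero_less_mult_iff)
  moreover have "v \<bullet> v \<le> (T * lam) * (v \<bullet> v)"
    using assms(3)[OF v(1)] v(1,3) by simp
  ultimately have "1 \<le> T * lam"
    by simp
  then show ?thesis
    using assms(2) by (simp add: inverse_eq_divide divide_le_eq mult.commute)
qed

definition lql_moment :: "real \<Rightarrow> real \<Rightarrow> nat \<Rightarrow> real" where
  "lql_moment q a i = qpoch a q i / (a ^ i * q ^ (i choose 2))"

definition lql_coeff :: "real \<Rightarrow> real \<Rightarrow> nat \<Rightarrow> nat \<Rightarrow> real" where
  "lql_coeff q a m k = (-1) ^ k * q_binomial q m k * q ^ (2 * (k choose 2)) * a ^ k / qpoch a q k"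

definition lql_sqnorm :: "real \<Rightarrow> real \<Rightarrow> nat \<Rightarrow> real" where
  "lql_sqnorm q a m = qpoch q q m / (q ^ m * qpoch a q m)"

lemma lql_coeff_eq_0: "m < k \<Longrightarrow> lql_coeff q a m k = 0"
  by (simp add: lql_coeff_def q_binomial_eq_0)

lemma lql_coeff_self:
  assumes "0 < q" "q < 1"
  shows "lql_coeff q a m m = (-1) ^ m * q ^ (2 * (m choose 2)) * a ^ m / qpoch a q m"
  using assms by (simp add: lql_coeff_def q_binomial_self)

lemma lql_coeff_self_neq_0:
  assumes "0 < q" "q < 1" "0 < a" "a < 1"
  shows "lql_coeff q a m m \<noteq> 0"
  using qpoch_pos[of a q m] assms by (simp add: lql_coeff_self)

lemma lql_sqnorm_pos:
  assumes "0 < q" "q < 1" "0 \<le> a" "a < 1"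
  shows "0 < lql_sqnorm q a m"
  using qpoch_pos[of a q m] qpoch_pos[of q q m] assms by (simp add: lql_sqnorm_def)

lemma abs_lql_coeff:
  assumes "0 < q" "q < 1" "0 \<le> a" "a < 1"
  shows "\<bar>lql_coeff q a m k\<bar> = q_binomial q m k * q ^ (2 * (k choose 2)) * a ^ k / qpoch a q k"
  using assms q_binomial_nonneg[of q m k] qpoch_pos[of a q k]
  by (simp add: lql_coeff_def abs_mult power_abs)

lemma sum_abs_lql_coeff:
  assumes "0 < q" "q < 1" "0 \<le> a" "a < 1"
  shows "(\<Sum>k\<le>m. \<bar>lql_coeff q a m k\<bar>) = 1 / qpoch a q m"
  using sum_q_binomial_div_qpoch[OF assms] by (simp add: abs_lql_coeff[OF assms])

lemma lql_coeff_mult_moment: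
  assumes "0 < q" "q < 1" "0 < a" "a < 1"
  shows "lql_coeff q a m j * lql_moment q a (j + k)
    = (-1) ^ j * q_binomial q m j * q ^ (j choose 2) * (\<Prod>l<k. inverse q ^ j - a * q ^ l)
        / (a ^ k * q ^ (k choose 2))"
proof -
  have "inverse q ^ j - a * q ^ l = inverse q ^ j * (1 - a * q ^ j * q ^ l)" for l
    using assms by (simp add: field_simps)
  then have "(\<Prod>l<k. inverse q ^ j - a * q ^ l) = inverse q ^ (j * k) * qpoch (a * q ^ j) q k"
    by (simp add: qpoch_def prod.distrib power_mult)
  moreover have "qpoch a q j \<noteq> 0"
    using qpoch_pos[of a q j] assms by simp
  ultimately show ?thesis
    using assms
    by (simp add: lql_coeff_def lql_moment_def qpoch_add add_choose_two power_add field_simps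
        mult_2 power_inverse)
qed

lemma lql_coeff_moment_sum:
  assumes "0 < q" "q < 1" "0 < a" "a < 1" "k \<le> m"
  shows "lql_coeff q a m m * (\<Sum>j\<le>m. lql_coeff q a m j * lql_moment q a (j + k))
    = (if k = m then lql_sqnorm q a m else 0)"
proof -
  have sum: "(\<Sum>j\<le>m. lql_coeff q a m j * lql_moment q a (j + k))
      = (if k = m then qpoch (inverse q ^ m) q m else 0) / (a ^ k * q ^ (k choose 2))"
    using q_difference_poly[OF assms(1,2), of 0 k m a] assms(5)
    by (simp add: lql_coeff_mult_moment[OF assms(1-4)] sum_divide_distrib[symmetric])
  have "q ^ (2 * (m choose 2)) * q ^ m = q ^ (m * m)"
  proof -
    have "m * m = 2 * (m choose 2) + m"
      by (induction m) (simp_all add: Suc_choose_two numeral_2_eq_2)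
    then show ?thesis
      by (simp add: power_add)
  qed
  moreover have "(-1) ^ m * qpoch (inverse q ^ m) q m * q ^ (2 * (m choose 2)) * q ^ m
      = ((-1) ^ m * (-1) ^ m) * (inverse q ^ (m * m) * (q ^ (2 * (m choose 2)) * q ^ m))
          * (q ^ (m choose 2) * qpoch q q m)"
    unfolding qpoch_inverse_power[OF assms(1,2)] q_binomial_self[OF assms(1,2)]
    by (simp only: mult_ac mult_1_right)
  ultimately have Y: "(-1) ^ m * qpoch (inverse q ^ m) q m * q ^ (2 * (m choose 2)) * q ^ m
      = q ^ (m choose 2) * qpoch q q m"
    using assms(1) by (simp add: power_inverse)
  have A: "qpoch a q m \<noteq> 0"
    using qpoch_pos[of a q m] assms by simp
  have "lql_coeff q a m m * qpoch (inverse q ^ m) q m / (a ^ m * q ^ (m choose 2))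
      = (-1) ^ m * qpoch (inverse q ^ m) q m * q ^ (2 * (m choose 2)) * q ^ m
          / (q ^ m * q ^ (m choose 2) * qpoch a q m)"
    using assms A by (simp add: lql_coeff_self field_simps)
  also have "\<dots> = lql_sqnorm q a m"
    unfolding Y using assms A by (simp add: lql_sqnorm_def)
  finally show ?thesis
    using sum by simp
qed

lemma lql_orthogonal:
  assumes "0 < q" "q < 1" "0 < a" "a < 1" "m \<le> n" "m' \<le> n"
  shows "(\<Sum>i\<le>n. \<Sum>k\<le>n. lql_coeff q a m i * lql_coeff q a m' k * lql_moment q a (i + k))
    = (if m = m' then lql_sqnorm q a m else 0)"
  using assms(5,6)
proof (induction m m' rule: linorder_wlog)
  case (le m' m)
  define X where "X i = (\<Sum>k\<le>m. lql_coeff q a m k * lql_moment q a (k + i))" for i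
  have diag: "lql_coeff q a m m \<noteq> 0"
    using lql_coeff_self_neq_0[OF assms(1-4)] .
  have X: "X i = (if i = m then lql_sqnorm q a m / lql_coeff q a m m else 0)" if "i \<le> m" for i
  proof -
    have "X i = lql_coeff q a m m * X i / lql_coeff q a m m"
      using diag by simp
    then show ?thesis
      using lql_coeff_moment_sum[OF assms(1-4) that] by (simp add: X_def)
  qed
  have "(\<Sum>i\<le>n. \<Sum>k\<le>n. lql_coeff q a m' i * lql_coeff q a m k * lql_moment q a (i + k))
      = (\<Sum>i\<le>n. lql_coeff q a m' i * (\<Sum>k\<le>n. lql_coeff q a m k * lql_moment q a (k + i)))"
    by (simp add: sum_distrib_left mult_ac add.commute)
  also have "\<dots> = (\<Sum>i\<le>n. lql_coeff q a m' i * X i)"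
    unfolding X_def using le by (intro sum.cong refl arg_cong2[where f = "(*)"] sum.mono_neutral_right)
      (auto simp: lql_coeff_eq_0)
  also have "\<dots> = (\<Sum>i\<le>m'. lql_coeff q a m' i * X i)"
    using le by (intro sum.mono_neutral_right) (auto simp: lql_coeff_eq_0)
  also have "\<dots> = (\<Sum>i\<le>m'. if i = m then lql_sqnorm q a m else 0)"
    using le diag by (intro sum.cong refl) (auto simp: X)
  also have "\<dots> = (if m' = m then lql_sqnorm q a m else 0)"
    using le by auto
  finally show ?case
    by auto
next
  case (sym m m')
  have "(\<Sum>i\<le>n. \<Sum>k\<le>n. lql_coeff q a m' i * lql_coeff q a m k * lql_moment q a (i + k))
      = (\<Sum>k\<le>n. \<Sum>i\<le>n. lql_coeff q a m k * lql_coeff q a m' i * lql_moment q a (k + i))"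
    by (subst sum.swap) (simp only: mult.commute add.commute)
  then show ?case
    using sym by auto
qed

lemma lql_coeff_mult_minus_one_power:
  assumes "0 < q" "q < 1" "0 \<le> a" "a < 1"
  shows "lql_coeff q a m k * (-1) ^ k = \<bar>lql_coeff q a m k\<bar>"
  by (simp add: abs_lql_coeff[OF assms]) (simp add: lql_coeff_def)

lemma sum_abs_lql_coeff_power2_div_sqnorm:
  assumes "0 < q" "q < 1" "0 \<le> a" "a < 1"
  shows "(\<Sum>k\<le>m. \<bar>lql_coeff q a m k\<bar>)\<^sup>2 / lql_sqnorm q a m = q ^ m / (qpoch q q m * qpoch a q m)"
  using qpoch_pos[of a q m] qpoch_pos[of q q m] assms
  by (simp add: sum_abs_lql_coeff[OF assms] lql_sqnorm_def power2_eq_square)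

lemma ell_eq_lql:
  assumes "0 < q" "q < 1"
  shows "ell q \<alpha> m x = (-1) ^ m * sqrt (qpoch (q powr (\<alpha> + 1)) q m * q ^ m / qpoch q q m)
    * (\<Sum>k\<le>m. lql_coeff q (q powr (\<alpha> + 1)) m k * x ^ k)"
proof -
  define a where "a = q powr (\<alpha> + 1)"
  have "qpoch (q powr (- real m)) q k * q ^ ((k + 1) choose 2) * q powr ((\<alpha> + real m) * real k) * x ^ k
      / (qpoch q q k * qpoch a q k) = lql_coeff q a m k * x ^ k" for k
  proof -
    have pm: "q powr (- real m) = inverse q ^ m"
      using assms by (simp add: powr_minus powr_realpow power_inverse)
    have pk: "q powr ((\<alpha> + real m) * real k) = a ^ k * q ^ (m * k) * inverse q ^ k"
    proof -
      have "(\<alpha> + real m) * real k = (\<alpha> + 1) * real k + real (m * k) - real k"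
        by (simp add: algebra_simps)
      then show ?thesis
        using assms unfolding a_def
        by (simp add: powr_add powr_diff powr_realpow powr_powr[symmetric] power_inverse
            divide_inverse power_mult)
    qed
    have "qpoch q q k \<noteq> 0"
      using qpoch_pos[of q q k] assms by simp
    then show ?thesis
      unfolding pm pk qpoch_inverse_power[OF assms] Suc_eq_plus1[symmetric] Suc_choose_two
      using assms by (simp add: lql_coeff_def power_add mult_2 power_inverse field_simps)
  qed
  then show ?thesis
    unfolding ell_def a_def by simp
qed

lemma ell_minus_one_power2:
  assumes "0 < q" "q < 1" "\<alpha> > -1"
  shows "(ell q \<alpha> m (-1))\<^sup>2 = q ^ m / (qpoch q q m * qpoch (q powr (\<alpha> + 1)) q m)"
proof -
  define a where "a = q powr (\<alpha> + 1)"
  have a: "0 < a" "a < 1"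
    unfolding a_def using assms powr_less_mono2[of "\<alpha> + 1" q 1] by auto
  have "((-1::real) ^ m)\<^sup>2 = 1"
    by (simp flip: power_mult)
  then have "(ell q \<alpha> m (-1))\<^sup>2 = (sqrt (qpoch a q m * q ^ m / qpoch q q m))\<^sup>2 * (1 / qpoch a q m)\<^sup>2"
    using sum_abs_lql_coeff[OF assms(1,2) less_imp_le[OF a(1)] a(2)]
    by (simp add: ell_eq_lql[OF assms(1,2)] lql_coeff_mult_minus_one_power[OF assms(1,2) less_imp_le[OF a(1)] a(2)]
        power_mult_distrib power_divide flip: a_def)
  also have "\<dots> = q ^ m / (qpoch q q m * qpoch a q m)"
    using qpoch_pos[of a q m] qpoch_pos[of q q m] assms a by (simp add: power2_eq_square)
  finally show ?thesis
    unfolding a_def .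
qed

lemma hankel_mat_entry:
  assumes "0 < q" "i \<le> n" "k \<le> n"
  shows "hankel_mat q \<alpha> n $$ (i, k) = lql_moment q (q powr (\<alpha> + 1)) (i + k)"
proof -
  define j where "j = i + k"
  have "(q powr (\<alpha> + 1)) ^ j = q powr ((\<alpha> + 1) * real j)"
    using assms(1) by (simp add: powr_realpow[symmetric] powr_powr)
  moreover have "q ^ (j choose 2) = q powr real (j choose 2)"
    using assms(1) by (simp add: powr_realpow)
  ultimately have "(q powr (\<alpha> + 1)) ^ j * q ^ (j choose 2) = q powr ((\<alpha> + 1) * real j + real (j choose 2))"
    by (simp add: powr_add)
  moreover have "- real ((j + 1) choose 2) - \<alpha> * real j = - ((\<alpha> + 1) * real j + real (j choose 2))"
    by (simp add: Suc_choose_two algebra_simps)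
  ultimately have "q powr (- real ((j + 1) choose 2) - \<alpha> * real j)
      = 1 / ((q powr (\<alpha> + 1)) ^ j * q ^ (j choose 2))"
    by (simp only: powr_minus inverse_eq_divide)
  then show ?thesis
    using assms by (simp add: hankel_mat_def lql_moment_def j_def)
qed

lemma scalar_prod_mult_mat_vec_self:
  fixes A :: "'a :: comm_ring_1 mat"
  assumes "A \<in> carrier_mat (Suc n) (Suc n)" "v \<in> carrier_vec (Suc n)"
  shows "v \<bullet> (A *\<^sub>v v) = (\<Sum>i\<le>n. \<Sum>k\<le>n. v $ i * v $ k * A $$ (i, k))"
  using assms
  by (auto simp: scalar_prod_def atLeast0LessThan lessThan_Suc_atMost sum_distrib_left mult_ac
      intro!: sum.cong)

lemma hankel_mat_quadratic_form_bound:
  assumes "0 < q" "q < 1" "\<alpha> > -1" "v \<in> carrier_vec (Suc n)"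
  shows "v \<bullet> v \<le> (\<Sum>m\<le>n. q ^ m / (qpoch q q m * qpoch (q powr (\<alpha> + 1)) q m))
    * (v \<bullet> (hankel_mat q \<alpha> n *\<^sub>v v))"
proof -
  define a where "a = q powr (\<alpha> + 1)"
  have a: "0 < a" "a < 1"
    unfolding a_def using assms powr_less_mono2[of "\<alpha> + 1" q 1] by auto
  have "v \<bullet> v = (\<Sum>i\<le>n. (v $ i)\<^sup>2)"
    using assms(4) by (simp add: scalar_prod_def atLeast0LessThan lessThan_Suc_atMost power2_eq_square)
  also have "\<dots> \<le> (\<Sum>m\<le>n. (\<Sum>j\<le>m. \<bar>lql_coeff q a m j\<bar>)\<^sup>2 / lql_sqnorm q a m)
      * (\<Sum>i\<le>n. \<Sum>k\<le>n. v $ i * v $ k * lql_moment q a (i + k))"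
    using lql_coeff_eq_0 lql_coeff_self_neq_0[OF assms(1,2) a] lql_orthogonal[OF assms(1,2) a]
      lql_sqnorm_pos[OF assms(1,2) less_imp_le[OF a(1)] a(2)]
    by (intro quadratic_form_lower_bound) auto
  also have "(\<Sum>i\<le>n. \<Sum>k\<le>n. v $ i * v $ k * lql_moment q a (i + k))
      = (\<Sum>i\<le>n. \<Sum>k\<le>n. v $ i * v $ k * hankel_mat q \<alpha> n $$ (i, k))"
    using assms(1) by (intro sum.cong refl) (simp add: hankel_mat_entry a_def)
  also have "\<dots> = v \<bullet> (hankel_mat q \<alpha> n *\<^sub>v v)"
    using assms(4) by (intro scalar_prod_mult_mat_vec_self[symmetric]) (simp_all add: hankel_mat_def)
  also have "(\<Sum>m\<le>n. (\<Sum>j\<le>m. \<bar>lql_coeff q a m j\<bar>)\<^sup>2 / lql_sqnorm q a m)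
      = (\<Sum>m\<le>n. q ^ m / (qpoch q q m * qpoch a q m))"
    using sum_abs_lql_coeff_power2_div_sqnorm[OF assms(1,2) less_imp_le[OF a(1)] a(2)] by simp
  finally show ?thesis
    unfolding a_def .
qed

theorem mainTheorem10:
  fixes q \<alpha> lam_s :: real and n :: nat
  assumes "0 < q" and "q < 1" and "\<alpha> > -1"
    and "eigenvalue (hankel_mat q \<alpha> n) lam_s"
    and "\<forall>\<mu>. eigenvalue (hankel_mat q \<alpha> n) \<mu> \<longrightarrow> lam_s \<le> \<mu>"
  shows "lam_s \<ge> inverse (\<Sum>m\<le>n. q ^ m / (qpoch q q m * qpoch (q powr (\<alpha>+1)) q m))
    \<and> (\<forall>m. (ell q \<alpha> m (-1)) ^ 2 = q ^ m / (qpoch q q m * qpoch (q powr (\<alpha>+1)) q m))"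
proof -
  have "0 < q powr (\<alpha> + 1)" "q powr (\<alpha> + 1) < 1"
    using assms(1-3) powr_less_mono2[of "\<alpha> + 1" q 1] by auto
  then have "0 < (\<Sum>m\<le>n. q ^ m / (qpoch q q m * qpoch (q powr (\<alpha> + 1)) q m))"
    using assms(1,2) qpoch_pos by (intro sum_pos) auto
  then have "inverse (\<Sum>m\<le>n. q ^ m / (qpoch q q m * qpoch (q powr (\<alpha> + 1)) q m)) \<le> lam_s"
    using hankel_mat_quadratic_form_bound[OF assms(1-3)]
    by (intro eigenvalue_ge_inverse[OF assms(4)]) (simp_all add: hankel_mat_def)
  then show ?thesis
    using ell_minus_one_power2[OF assms(1-3)] by simp
qed

end
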